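(* Let $G$ be a graph, $t$ an integer and $k$ a nonnegative integer. For a set of vertices $X$, let $E_X$ denote the set of all pairs $\{u,v\}$ with $u,v\in X$, $u\neq v$. Start with $\mathcal{F}=\{E_X : X \text{ is a clique of size } t \text{ in } G\}$ and repeatedly apply the following rule until it is no longer applicable: if there is an edge $\{x,y\}$ of $G$ such that $\mathcal{F}_{xy}=\{X\subseteq V(G)\setminus\{x,y\} : E_{X\cup\{x,y\}}\in\mathcal{F}\}$ satisfies $|\mathcal{F}_{xy}|>2\cdot(t-2)!\cdot k^{t-2}$, find distinct sets $X_1,\ldots,X_{k+1}\in\mathcal{F}_{xy}$ forming a sunflower with core $Y$, remove from $\mathcal{F}$ every set $E_Z$ with $Y\cup\{x,y\}\subseteq Z$, and add $E_{Y\cup\{x,y\}}$ to $\mathcal{F}$. Let $\mathcal{F}'$ be the resulting family. Build a graph $G'=(V',E')$ as follows: start with $V'=E'=\emptyset$; for every $E_X\in\mathcal{F}'$, if $|X|=t$ set $V'\gets V'\cup X$ and $E'\gets E'\cup E_X$; if $|X|<t$, let $V_X$ be a set of $t-|X|$ new vertices and set $V'\gets V'\cup X\cup V_X$ and $E'\gets E'\cup E_{X\cup V_X}$. Then $(G,k)$ is a yes-instance of $K_t$-free edge deletion if and only if $(G',k)$ is a yes-instance of $K_t$-free edge deletion.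
   Context: In the $K_t$-free edge deletion problem, the input is a graph $G$ and an integer $k$, and the question is whether there is a set of at most $k$ edges of $G$ whose removal leaves a graph with no clique on $t$ vertices. Distinct sets $S_1,\ldots,S_p$ form a sunflower with core $Y$ if $S_i\cap S_j=Y$ for all $i\neq j$ and $S_i\setminus Y\neq\emptyset$ for every $i$; when the rule above is applicable, such a sunflower of $k+1$ sets exists by the sunflower lemma. *)

theory Defs
  imports Main
begin

definition edges_of :: "'a set \<Rightarrow> 'a set set" where
  "edges_of X = {{u, v} | u v. u \<in> X \<and> v \<in> X \<and> u \<noteq> v}"

definition graph :: "'a set \<Rightarrow> 'a set set \<Rightarrow> bool" where
  "graph V E \<longleftrightarrow> finite V \<and> E \<subseteq> edges_of V"

definition is_clique :: "'a set \<Rightarrow> 'a set set \<Rightarrow> 'a set \<Rightarrow> bool" where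
  "is_clique V E X \<longleftrightarrow> X \<subseteq> V \<and> edges_of X \<subseteq> E"

definition Kt_free :: "'a set \<Rightarrow> 'a set set \<Rightarrow> nat \<Rightarrow> bool" where
  "Kt_free V E t \<longleftrightarrow> \<not> (\<exists>X. is_clique V E X \<and> card X = t)"

definition Kt_free_edge_deletion_yes :: "'a set \<Rightarrow> 'a set set \<Rightarrow> nat \<Rightarrow> nat \<Rightarrow> bool" where
  "Kt_free_edge_deletion_yes V E t k \<longleftrightarrow>
     (\<exists>S. S \<subseteq> E \<and> finite S \<and> card S \<le> k \<and> Kt_free V (E - S) t)"

text \<open>Sunflower with core Y (core contained in every petal, as produced by the sunflower lemma).\<close>
definition sunflower :: "'a set set \<Rightarrow> 'a set \<Rightarrow> bool" where
  "sunflower S Y \<longleftrightarrow>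
     (\<forall>A\<in>S. \<forall>B\<in>S. A \<noteq> B \<longrightarrow> A \<inter> B = Y) \<and> (\<forall>A\<in>S. Y \<subseteq> A \<and> A - Y \<noteq> {})"

text \<open>The family F of edge sets E_X is represented by the family of the vertex sets X.\<close>
definition initial_family :: "'a set \<Rightarrow> 'a set set \<Rightarrow> nat \<Rightarrow> 'a set set" where
  "initial_family V E t = {X. is_clique V E X \<and> card X = t}"

definition link_family :: "'a set \<Rightarrow> 'a set set \<Rightarrow> 'a \<Rightarrow> 'a \<Rightarrow> 'a set set" where
  "link_family V F x y = {X. X \<subseteq> V - {x, y} \<and> X \<union> {x, y} \<in> F}"

definition rule_bound :: "nat \<Rightarrow> nat \<Rightarrow> nat" where
  "rule_bound t k = 2 * fact (t - 2) * k ^ (t - 2)"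

definition rule_applicable :: "'a set \<Rightarrow> 'a set set \<Rightarrow> nat \<Rightarrow> nat \<Rightarrow> 'a set set \<Rightarrow> bool" where
  "rule_applicable V E t k F \<longleftrightarrow>
     (\<exists>x y. {x, y} \<in> E \<and> card (link_family V F x y) > rule_bound t k)"

definition rule_step :: "'a set \<Rightarrow> 'a set set \<Rightarrow> nat \<Rightarrow> nat \<Rightarrow> 'a set set \<Rightarrow> 'a set set \<Rightarrow> bool" where
  "rule_step V E t k F F' \<longleftrightarrow>
     (\<exists>x y. {x, y} \<in> E \<and> card (link_family V F x y) > rule_bound t k \<and>
        (\<exists>S Y. S \<subseteq> link_family V F x y \<and> card S = k + 1 \<and> sunflower S Y \<and>
               F' = {Z \<in> F. \<not> (Y \<union> {x, y} \<subseteq> Z)} \<union> {Y \<union> {x, y}}))"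

text \<open>The graph G' built from the final family: original vertices Inl v, and for each
  X in the family the t - |X| new vertices Inr (X, i), i < t - |X|.\<close>
definition extended_set :: "nat \<Rightarrow> 'a set \<Rightarrow> ('a + ('a set \<times> nat)) set" where
  "extended_set t X = Inl ` X \<union> {Inr (X, i) | i. i < t - card X}"

definition kernel_V :: "nat \<Rightarrow> 'a set set \<Rightarrow> ('a + ('a set \<times> nat)) set" where
  "kernel_V t F = (\<Union>X\<in>F. extended_set t X)"

definition kernel_E :: "nat \<Rightarrow> 'a set set \<Rightarrow> ('a + ('a set \<times> nat)) set set" where
  "kernel_E t F = (\<Union>X\<in>F. edges_of (extended_set t X))"

end

(*
  A set S of at most k edges of G leaves no K_t iff it meets E_X for every X in the initial
  family. A rule step preserves, for every such S, whether S meets all members of the family: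
  the k+1 sets E_{X_i \<union> {x,y}} pairwise share only the edges of Y \<union> {x,y}, so S cannot
  meet them all with k edges outside E_{Y \<union> {x,y}}, and meeting E_{Y \<union> {x,y}} also
  meets every removed superset. In G' the t-cliques are the padded members of F' and the t-cliques
  of G on original vertices, so a solution for G carries over to G'. Conversely, every edge of a
  solution for G' is projected to an edge of G inside the member of F' it belongs to; an edge at a
  padding vertex of X goes to an arbitrary edge of X, which exists since then |X| < t.
*)

theory Submission
  imports Defs
begin

definition hits :: "'a set set \<Rightarrow> 'a set set \<Rightarrow> bool" where
  "hits S F \<longleftrightarrow> (\<forall>Z\<in>F. S \<inter> edges_of Z \<noteq> {})"

definition clique_family :: "'a set \<Rightarrow> 'a set set \<Rightarrow> nat \<Rightarrow> 'a set set \<Rightarrow> bool" where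
  "clique_family V E t F \<longleftrightarrow>
     (\<forall>Z\<in>F. is_clique V E Z \<and> finite Z \<and> card Z \<le> t \<and> (card Z < t \<longrightarrow> edges_of Z \<noteq> {}))"

lemma edges_of_mono: "X \<subseteq> Y \<Longrightarrow> edges_of X \<subseteq> edges_of Y"
  unfolding edges_of_def by blast

lemma edges_of_subset: "e \<in> edges_of X \<Longrightarrow> e \<subseteq> X"
  unfolding edges_of_def by blast

lemma edges_of_transfer: "e \<in> edges_of X \<Longrightarrow> e \<subseteq> Y \<Longrightarrow> e \<in> edges_of Y"
  unfolding edges_of_def by blast

lemma image_in_edges_of:
  assumes "inj f" "e \<in> edges_of X" "f ` X \<subseteq> Y"
  shows "f ` e \<in> edges_of Y"
  using assms unfolding edges_of_def inj_def by blast

lemma is_clique_subset: "is_clique V E X \<Longrightarrow> Y \<subseteq> X \<Longrightarrow> is_clique V E Y"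
  unfolding is_clique_def using edges_of_mono by blast

lemma Kt_free_Diff_iff_hits: "Kt_free V (E - S) t \<longleftrightarrow> hits S (initial_family V E t)"
  unfolding Kt_free_def hits_def initial_family_def is_clique_def by blast

lemma sunflower_hits_core:
  assumes sf: "sunflower P Y" and S: "finite S" "card S < card P" and hit: "hits S P"
  shows "S \<inter> edges_of Y \<noteq> {}"
proof
  assume core: "S \<inter> edges_of Y = {}"
  obtain g where g: "\<And>A. A \<in> P \<Longrightarrow> g A \<in> S \<inter> edges_of A"
    using bchoice[of P "\<lambda>A e. e \<in> S \<inter> edges_of A"] hit unfolding hits_def by blast
  have "inj_on g P"
  proof (rule inj_onI, rule ccontr)
    fix A B assume AB: "A \<in> P" "B \<in> P" "g A = g B" "A \<noteq> B"
    then have "g A \<subseteq> A \<inter> B" using g edges_of_subset by (metis Int_iff le_inf_iff)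
    also have "A \<inter> B = Y" using sf AB unfolding sunflower_def by blast
    finally have "g A \<in> edges_of Y" using g AB(1) edges_of_transfer by blast
    then show False using core g AB(1) by blast
  qed
  then have "card P \<le> card S" using card_inj_on_le S(1) g by blast
  then show False using S(2) by linarith
qed

lemma sunflower_Un_disjoint:
  assumes sf: "sunflower P Y" and disj: "\<And>A. A \<in> P \<Longrightarrow> A \<inter> C = {}"
  shows "sunflower ((\<lambda>A. A \<union> C) ` P) (Y \<union> C)"
  unfolding sunflower_def
proof (intro conjI ballI impI)
  fix A' B' assume "A' \<in> (\<lambda>A. A \<union> C) ` P" "B' \<in> (\<lambda>A. A \<union> C) ` P" "A' \<noteq> B'"
  then obtain A B where "A \<in> P" "B \<in> P" "A \<noteq> B" "A' = A \<union> C" "B' = B \<union> C" by auto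
  then show "A' \<inter> B' = Y \<union> C" using sf unfolding sunflower_def by auto
next
  fix A' assume "A' \<in> (\<lambda>A. A \<union> C) ` P"
  then obtain A where A: "A \<in> P" "A' = A \<union> C" by auto
  have "A' - (Y \<union> C) = A - Y" using A disj by blast
  then show "Y \<union> C \<subseteq> A'" "A' - (Y \<union> C) \<noteq> {}"
    using sf A unfolding sunflower_def by auto
qed

lemma inj_on_Un_disjoint:
  assumes "\<And>A. A \<in> P \<Longrightarrow> A \<inter> C = {}"
  shows "inj_on (\<lambda>A. A \<union> C) P"
  using assms by (auto simp: inj_on_def)

lemma rule_stepE:
  assumes "rule_step V E t k F F2"
  obtains x y P Y where "{x, y} \<in> E" "P \<subseteq> link_family V F x y" "card P = k + 1" "sunflower P Y"
    "F2 = {Z \<in> F. \<not> Y \<union> {x, y} \<subseteq> Z} \<union> {Y \<union> {x, y}}"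
  using assms unfolding rule_step_def by blast

lemma hits_replace_supersets_iff:
  assumes "hits S F \<Longrightarrow> S \<inter> edges_of C \<noteq> {}"
  shows "hits S ({Z \<in> F. \<not> C \<subseteq> Z} \<union> {C}) \<longleftrightarrow> hits S F"
proof
  assume "hits S ({Z \<in> F. \<not> C \<subseteq> Z} \<union> {C})"
  then show "hits S F" using edges_of_mono[of C] unfolding hits_def by blast
next
  assume "hits S F"
  then show "hits S ({Z \<in> F. \<not> C \<subseteq> Z} \<union> {C})" using assms unfolding hits_def by blast
qed

lemma rule_step_hits_iff:
  assumes step: "rule_step V E t k F F2" and S: "finite S" "card S \<le> k"
  shows "hits S F2 \<longleftrightarrow> hits S F"
proof -
  obtain x y P Y where "{x, y} \<in> E"
    and P: "P \<subseteq> link_family V F x y" "card P = k + 1" "sunflower P Y"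
    and F2: "F2 = {Z \<in> F. \<not> Y \<union> {x, y} \<subseteq> Z} \<union> {Y \<union> {x, y}}"
    using step by (rule rule_stepE)
  have disj: "\<And>A. A \<in> P \<Longrightarrow> A \<inter> {x, y} = {}"
    using P(1) unfolding link_family_def by blast
  have "S \<inter> edges_of (Y \<union> {x, y}) \<noteq> {}" if "hits S F"
  proof (rule sunflower_hits_core)
    show "sunflower ((\<lambda>A. A \<union> {x, y}) ` P) (Y \<union> {x, y})"
      using P(3) disj by (rule sunflower_Un_disjoint)
    show "card S < card ((\<lambda>A. A \<union> {x, y}) ` P)"
      using card_image[OF inj_on_Un_disjoint[OF disj]] P(2) S(2) by simp
    show "hits S ((\<lambda>A. A \<union> {x, y}) ` P)"
      using that P(1) unfolding hits_def link_family_def by blast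
  qed (use S in blast)
  then show ?thesis unfolding F2 by (rule hits_replace_supersets_iff)
qed

lemma rule_steps_hits_iff:
  assumes "(rule_step V E t k)\<^sup>*\<^sup>* F0 F" "finite S" "card S \<le> k"
  shows "hits S F \<longleftrightarrow> hits S F0"
  using assms(1)
proof induction
  case (step F1 F2)
  then show ?case using rule_step_hits_iff[OF step.hyps(2) assms(2,3)] by simp
qed simp

lemma clique_family_initial:
  assumes "graph V E" shows "clique_family V E t (initial_family V E t)"
proof -
  have "finite Z" if "is_clique V E Z" for Z
    using that assms finite_subset unfolding is_clique_def graph_def by blast
  then show ?thesis unfolding clique_family_def initial_family_def by simp
qed

lemma clique_family_rule_step:
  assumes G: "graph V E" and F: "clique_family V E t F" and step: "rule_step V E t k F F2"
  shows "clique_family V E t F2"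
proof -
  obtain x y P Y where xy: "{x, y} \<in> E"
    and P: "P \<subseteq> link_family V F x y" "card P = k + 1" "sunflower P Y"
    and F2: "F2 = {Z \<in> F. \<not> Y \<union> {x, y} \<subseteq> Z} \<union> {Y \<union> {x, y}}"
    using step by (rule rule_stepE)
  obtain A where A: "A \<in> P" using P(2) by fastforce
  have "A \<union> {x, y} \<in> F" using A P(1) unfolding link_family_def by blast
  then have A_ok: "is_clique V E (A \<union> {x, y})" "finite (A \<union> {x, y})" "card (A \<union> {x, y}) \<le> t"
    using F unfolding clique_family_def by auto
  let ?C = "Y \<union> {x, y}"
  have sub: "?C \<subseteq> A \<union> {x, y}" using A P(3) unfolding sunflower_def by blast
  have "{x, y} \<in> edges_of V" using xy G unfolding graph_def by blast
  then have "{x, y} \<in> edges_of ?C" by (rule edges_of_transfer) blast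
  then have "is_clique V E ?C \<and> finite ?C \<and> card ?C \<le> t \<and> (card ?C < t \<longrightarrow> edges_of ?C \<noteq> {})"
    using is_clique_subset[OF A_ok(1) sub] finite_subset[OF sub A_ok(2)] card_mono[OF A_ok(2) sub] A_ok(3)
    by auto
  then show ?thesis using F unfolding F2 clique_family_def by auto
qed

lemma clique_family_rule_steps:
  assumes "graph V E" "(rule_step V E t k)\<^sup>*\<^sup>* (initial_family V E t) F"
  shows "clique_family V E t F"
  using assms(2)
proof induction
  case base
  show ?case using clique_family_initial[OF assms(1)] .
next
  case (step F F2)
  show ?case using assms(1) step.IH step.hyps(2) by (rule clique_family_rule_step)
qed

lemma finite_extended_set: "finite X \<Longrightarrow> finite (extended_set t X)"
  unfolding extended_set_def by simp

lemma card_extended_set: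
  assumes "finite X" "card X \<le> t"
  shows "card (extended_set t X) = t"
proof -
  have "extended_set t X = Inl ` X \<union> (\<lambda>i. Inr (X, i)) ` {..<t - card X}"
    unfolding extended_set_def by auto
  moreover have "card (Inl ` X \<union> (\<lambda>i. Inr (X, i)) ` {..<t - card X}) = card X + (t - card X)"
    using assms(1) by (subst card_Un_disjoint) (auto simp: card_image inj_on_def)
  ultimately show ?thesis using assms(2) by simp
qed

lemma Inl_in_extended_set [simp]: "Inl u \<in> extended_set t X \<longleftrightarrow> u \<in> X"
  unfolding extended_set_def by auto

lemma Inr_in_extended_set [simp]: "Inr (Y, i) \<in> extended_set t X \<longleftrightarrow> Y = X \<and> i < t - card X"
  unfolding extended_set_def by auto

lemma Inl_in_kernel_V [simp]: "Inl u \<in> kernel_V t F \<longleftrightarrow> (\<exists>X\<in>F. u \<in> X)"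
  unfolding kernel_V_def by auto

lemma Inr_in_kernel_V [simp]: "Inr (X, i) \<in> kernel_V t F \<longleftrightarrow> X \<in> F \<and> i < t - card X"
  unfolding kernel_V_def by auto

lemma kernel_E_InrD:
  assumes "e \<in> kernel_E t F" "Inr (X, i) \<in> e"
  shows "X \<in> F \<and> e \<subseteq> extended_set t X"
proof -
  obtain X' where X': "X' \<in> F" "e \<subseteq> extended_set t X'"
    using assms(1) edges_of_subset unfolding kernel_E_def by blast
  then have "X' = X" using assms(2) by auto
  then show ?thesis using X' by simp
qed

lemma image_Inl_in_kernel_E:
  assumes "Inl ` e \<in> kernel_E t F"
  shows "\<exists>X\<in>F. e \<in> edges_of X"
proof -
  obtain X where "X \<in> F" "Inl ` e \<in> edges_of (extended_set t X)"
    using assms unfolding kernel_E_def by blast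
  moreover have "e \<in> edges_of X" if edge: "Inl ` e \<in> edges_of (extended_set t X)"
  proof -
    obtain a b where ab: "Inl ` e = {a, b}" "a \<in> extended_set t X" "b \<in> extended_set t X" "a \<noteq> b"
      using edge unfolding edges_of_def by blast
    then obtain u v where uv: "a = Inl u" "b = Inl v" by blast
    then have "Inl ` e = (Inl ` {u, v} :: ('a + 'a set \<times> nat) set)" using ab(1) by simp
    then have "e = {u, v}" by (simp only: inj_image_eq_iff[OF inj_Inl])
    then show ?thesis using ab uv unfolding edges_of_def by auto
  qed
  ultimately show ?thesis by blast
qed

lemma extended_set_is_clique:
  "X \<in> F \<Longrightarrow> is_clique (kernel_V t F) (kernel_E t F) (extended_set t X)"
  unfolding is_clique_def kernel_V_def kernel_E_def by blast

lemma kernel_clique_cases: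
  assumes F: "clique_family V E t F"
    and C: "is_clique (kernel_V t F) (kernel_E t F) C" "card C = t"
  obtains X where "X \<in> F" "C = extended_set t X"
    | D where "is_clique V E D" "card D = t" "C = Inl ` D"
proof -
  consider (padded) X i where "Inr (X, i) \<in> C" | (original) "C \<subseteq> range Inl"
    by (metis obj_sumE prod.exhaust rangeI subsetI)
  then show thesis
  proof cases
    case padded
    then have X: "X \<in> F" using C(1) unfolding is_clique_def by auto
    have "C \<subseteq> extended_set t X"
    proof
      fix c assume c: "c \<in> C"
      show "c \<in> extended_set t X"
      proof (cases "c = Inr (X, i)")
        case False
        then have "{Inr (X, i), c} \<in> kernel_E t F"
          using padded c C(1) unfolding is_clique_def edges_of_def by blast
        then show ?thesis using kernel_E_InrD by blast
      qed (use padded C(1) in \<open>auto simp: is_clique_def\<close>)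
    qed
    moreover have "finite X" "card X \<le> t" using F X unfolding clique_family_def by auto
    ultimately have "C = extended_set t X"
      using card_subset_eq finite_extended_set card_extended_set C(2) by metis
    then show thesis using X that(1) by blast
  next
    case original
    define D where "D = Inl -` C"
    have CD: "C = Inl ` D" using original unfolding D_def by auto
    have "D \<subseteq> V"
    proof
      fix u assume "u \<in> D"
      then have "Inl u \<in> kernel_V t F" using C(1) CD unfolding is_clique_def by auto
      then show "u \<in> V" using F unfolding clique_family_def is_clique_def by auto
    qed
    moreover have "edges_of D \<subseteq> E"
    proof
      fix e assume "e \<in> edges_of D"
      then have "Inl ` e \<in> kernel_E t F"
        using image_in_edges_of[OF inj_Inl] C(1) CD unfolding is_clique_def by blast
      then show "e \<in> E"
        using image_Inl_in_kernel_E F unfolding clique_family_def is_clique_def by blast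
    qed
    moreover have "card D = t" using C(2) CD card_image inj_Inl by (metis inj_on_subset subset_UNIV)
    ultimately show thesis using that(2) CD unfolding is_clique_def by blast
  qed
qed

lemma extended_set_edge_projection:
  assumes nonempty: "\<And>X. X \<in> F \<Longrightarrow> card X < t \<Longrightarrow> edges_of X \<noteq> {}"
  obtains f where "\<And>X e. X \<in> F \<Longrightarrow> e \<in> edges_of (extended_set t X) \<Longrightarrow> f e \<in> edges_of X"
proof -
  have "\<exists>d. \<forall>X\<in>F. e \<in> edges_of (extended_set t X) \<longrightarrow> d \<in> edges_of X" for e
  proof (cases "e \<subseteq> range Inl")
    case True
    have "Inl -` e \<in> edges_of X" if edge: "e \<in> edges_of (extended_set t X)" for X
    proof -
      obtain a b where ab: "e = {a, b}" "a \<in> extended_set t X" "b \<in> extended_set t X" "a \<noteq> b"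
        using edge unfolding edges_of_def by blast
      then obtain u v where "a = Inl u" "b = Inl v" using True by blast
      then show ?thesis using ab unfolding edges_of_def by auto
    qed
    then show ?thesis by blast
  next
    case False
    then obtain Y i where Yi: "Inr (Y, i) \<in> e" by (metis obj_sumE prod.exhaust rangeI subsetI)
    have "(SOME d. d \<in> edges_of Y) \<in> edges_of X"
      if "X \<in> F" "e \<in> edges_of (extended_set t X)" for X
    proof -
      have "Y = X" "i < t - card X" using Yi edges_of_subset[OF that(2)] by auto
      then show ?thesis using nonempty[OF that(1)] by (simp add: some_in_eq)
    qed
    then show ?thesis by blast
  qed
  then show thesis using that by metis
qed

lemma kernel_yes_if_hits:
  assumes F: "clique_family V E t F"
    and S: "finite S" "card S \<le> k" "Kt_free V (E - S) t" "hits S F"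
  shows "Kt_free_edge_deletion_yes (kernel_V t F) (kernel_E t F) t k"
proof -
  define S' where "S' = image Inl ` S \<inter> kernel_E t F"
  have "card S' \<le> card S"
    unfolding S'_def using S(1) by (metis Int_lower1 card_image_le card_mono finite_imageI le_trans)
  then have card_S': "card S' \<le> k" using S(2) by linarith
  have "\<not> is_clique (kernel_V t F) (kernel_E t F - S') C" if C: "card C = t" for C
  proof
    assume clique: "is_clique (kernel_V t F) (kernel_E t F - S') C"
    then have "is_clique (kernel_V t F) (kernel_E t F) C" unfolding is_clique_def by blast
    then obtain W where W: "Inl ` W \<subseteq> C" "S \<inter> edges_of W \<noteq> {}"
    proof (rule kernel_clique_cases[OF F _ C])
      fix X assume X: "X \<in> F" "C = extended_set t X"
      have "Inl ` X \<subseteq> C" unfolding X(2) by auto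
      moreover have "S \<inter> edges_of X \<noteq> {}" using S(4) X(1) unfolding hits_def by blast
      ultimately show thesis by (rule that)
    next
      fix D assume D: "is_clique V E D" "card D = t" "C = Inl ` D"
      then have "\<not> edges_of D \<subseteq> E - S" using S(3) unfolding Kt_free_def is_clique_def by blast
      then show thesis using that[of D] D unfolding is_clique_def by blast
    qed
    then obtain e where e: "e \<in> S" "e \<in> edges_of W" by blast
    have "Inl ` e \<in> edges_of C" using e(2) W(1) by (rule image_in_edges_of[OF inj_Inl])
    moreover have "Inl ` e \<in> S' \<or> Inl ` e \<notin> kernel_E t F" using e(1) unfolding S'_def by blast
    ultimately show False using clique unfolding is_clique_def by blast
  qed
  then have "Kt_free (kernel_V t F) (kernel_E t F - S') t" unfolding Kt_free_def by blast
  moreover have "S' \<subseteq> kernel_E t F" "finite S'" using S(1) unfolding S'_def by auto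
  ultimately show ?thesis unfolding Kt_free_edge_deletion_yes_def using card_S' by blast
qed

lemma hits_if_kernel_yes:
  assumes F: "clique_family V E t F"
    and yes: "Kt_free_edge_deletion_yes (kernel_V t F) (kernel_E t F) t k"
  obtains S where "S \<subseteq> E" "finite S" "card S \<le> k" "hits S F"
proof -
  obtain S' where S': "S' \<subseteq> kernel_E t F" "finite S'" "card S' \<le> k"
    "Kt_free (kernel_V t F) (kernel_E t F - S') t"
    using yes unfolding Kt_free_edge_deletion_yes_def by blast
  obtain f where f: "\<And>X e. X \<in> F \<Longrightarrow> e \<in> edges_of (extended_set t X) \<Longrightarrow> f e \<in> edges_of X"
    using extended_set_edge_projection[of F t] F unfolding clique_family_def by blast
  have "f ` S' \<subseteq> E"
    using S'(1) f F unfolding kernel_E_def clique_family_def is_clique_def by blast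
  moreover have "card (f ` S') \<le> k" using card_image_le[OF S'(2)] S'(3) by (rule le_trans)
  moreover have "hits (f ` S') F" unfolding hits_def
  proof
    fix X assume X: "X \<in> F"
    have "card (extended_set t X) = t"
      using F X card_extended_set unfolding clique_family_def by blast
    then have "\<not> is_clique (kernel_V t F) (kernel_E t F - S') (extended_set t X)"
      using S'(4) unfolding Kt_free_def by blast
    then obtain e where "e \<in> S'" "e \<in> edges_of (extended_set t X)"
      using extended_set_is_clique[OF X] unfolding is_clique_def by blast
    then show "f ` S' \<inter> edges_of X \<noteq> {}" using f[OF X] by blast
  qed
  ultimately show thesis using that S'(2) by blast
qed

theorem lemma4:
  fixes V :: "'a set" and E :: "'a set set" and t k :: nat and F' :: "'a set set"
  assumes "graph V E"
    and "(rule_step V E t k)\<^sup>*\<^sup>* (initial_family V E t) F'"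
    and "\<not> rule_applicable V E t k F'"
  shows "Kt_free_edge_deletion_yes V E t k \<longleftrightarrow>
         Kt_free_edge_deletion_yes (kernel_V t F') (kernel_E t F') t k"
proof -
  have F': "clique_family V E t F'" using clique_family_rule_steps assms(1,2) .
  have hits_iff: "hits S F' \<longleftrightarrow> Kt_free V (E - S) t" if "finite S" "card S \<le> k" for S
    using rule_steps_hits_iff[OF assms(2) that] Kt_free_Diff_iff_hits by blast
  show ?thesis
  proof
    assume "Kt_free_edge_deletion_yes V E t k"
    then obtain S where "finite S" "card S \<le> k" "Kt_free V (E - S) t"
      unfolding Kt_free_edge_deletion_yes_def by blast
    then show "Kt_free_edge_deletion_yes (kernel_V t F') (kernel_E t F') t k"
      using kernel_yes_if_hits[OF F'] hits_iff by blast
  next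
    assume "Kt_free_edge_deletion_yes (kernel_V t F') (kernel_E t F') t k"
    then obtain S where "S \<subseteq> E" "finite S" "card S \<le> k" "hits S F'"
      using hits_if_kernel_yes[OF F'] by blast
    then show "Kt_free_edge_deletion_yes V E t k"
      unfolding Kt_free_edge_deletion_yes_def using hits_iff by blast
  qed
qed

end
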